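(* Let $(X,d)$ be a complete metric space, let $N\in\mathbb{N}\setminus\{0\}$, let $\alpha:X\times X\rightarrow[0,+\infty)$ be $N$--transitive, and let $T:X\rightarrow X$ be an $\alpha$--contractive mapping of Meir--Keeler type such that $T$ is $\alpha$--admissible, there exists $x_{0}\in X$ with $\alpha(x_{0},Tx_{0})\geq1$, and at least one of the following holds: (i) $T$ is $\alpha$--orbitally continuous; (ii) $(X,d)$ is $(T,\alpha)$--regular. Assume moreover that $X$ is $\alpha$--connected. Then $T$ has a unique fixed point $x^{\ast}$, and $T^{n}x\rightarrow x^{\ast}$ as $n\rightarrow\infty$ for every $x\in X$.
   Context: $\mathbb{N}$ is the set of non-negative integers; $T^n$ is the $n$-th iterate of $T$. $T$ is an $\alpha$--contractive mapping of Meir--Keeler type if for every $\varepsilon>0$ there exists $\delta(\varepsilon)>0$ such that for all $x,y\in X$: $\varepsilon\leq d(x,y)<\varepsilon+\delta(\varepsilon)$ implies $\alpha(x,y)d(Tx,Ty)<\varepsilon$. $T$ is $\alpha$--admissible if $\alpha(x,y)\geq1$ implies $\alpha(Tx,Ty)\geq1$. $\alpha$ is $N$--transitive if for all $x_0,\dots,x_{N+1}\in X$ with $\alpha(x_i,x_{i+1})\geq1$ for all $i\in\{0,\dots,N\}$ one has $\alpha(x_0,x_{N+1})\geq1$. A sequence $\{x_n\}$ is $(T,\alpha)$--orbital if $x_n=T^nx_0$ and $\alpha(x_n,x_{n+1})\geq1$ for all $n$. $T$ is $\alpha$--orbitally continuous if for every $(T,\alpha)$--orbital sequence $\{x_n\}$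 with $x_n\rightarrow x$ there is a subsequence with $Tx_{n(k)}\rightarrow Tx$. $(X,d)$ is $(T,\alpha)$--regular if for every $(T,\alpha)$--orbital sequence $\{x_n\}$ with $x_n\rightarrow x$ there is a subsequence with $\alpha(x_{n(k)},x)\geq1$ for all $k$. An $\alpha$--chain from $x$ to $y$ is a tuple $(z_0,\dots,z_n)$ with $z_0=x$, $z_n=y$ and, for each $i\in\{1,\dots,n\}$, $\alpha(z_{i-1},z_i)\geq1$ or $\alpha(z_i,z_{i-1})\geq1$. $X$ is $\alpha$--connected if for all $x\neq y$ in $X$ there exists an $\alpha$--chain from $x$ to $y$. *)

theory Defs
  imports "HOL-Analysis.Analysis"
begin

definition alpha_MK_contractive :: "('a::metric_space \<Rightarrow> 'a \<Rightarrow> real) \<Rightarrow> ('a \<Rightarrow> 'a) \<Rightarrow> bool" where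
  "alpha_MK_contractive \<alpha> T \<longleftrightarrow>
     (\<forall>\<epsilon>>0. \<exists>\<delta>>0. \<forall>x y. \<epsilon> \<le> dist x y \<and> dist x y < \<epsilon> + \<delta> \<longrightarrow> \<alpha> x y * dist (T x) (T y) < \<epsilon>)"

definition alpha_admissible :: "('a \<Rightarrow> 'a \<Rightarrow> real) \<Rightarrow> ('a \<Rightarrow> 'a) \<Rightarrow> bool" where
  "alpha_admissible \<alpha> T \<longleftrightarrow> (\<forall>x y. \<alpha> x y \<ge> 1 \<longrightarrow> \<alpha> (T x) (T y) \<ge> 1)"

definition N_transitive :: "nat \<Rightarrow> ('a \<Rightarrow> 'a \<Rightarrow> real) \<Rightarrow> bool" where
  "N_transitive N \<alpha> \<longleftrightarrow>
     (\<forall>x :: nat \<Rightarrow> 'a. (\<forall>i\<le>N. \<alpha> (x i) (x (Suc i)) \<ge> 1) \<longrightarrow> \<alpha> (x 0) (x (Suc N)) \<ge> 1)"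

definition orbital :: "('a \<Rightarrow> 'a) \<Rightarrow> ('a \<Rightarrow> 'a \<Rightarrow> real) \<Rightarrow> (nat \<Rightarrow> 'a) \<Rightarrow> bool" where
  "orbital T \<alpha> x \<longleftrightarrow> (\<forall>n. x n = (T ^^ n) (x 0)) \<and> (\<forall>n. \<alpha> (x n) (x (Suc n)) \<ge> 1)"

definition alpha_orbitally_continuous :: "('a::topological_space \<Rightarrow> 'a) \<Rightarrow> ('a \<Rightarrow> 'a \<Rightarrow> real) \<Rightarrow> bool" where
  "alpha_orbitally_continuous T \<alpha> \<longleftrightarrow>
     (\<forall>x z. orbital T \<alpha> (x :: nat \<Rightarrow> 'a) \<and> x \<longlonglongrightarrow> z \<longrightarrow>
        (\<exists>r::nat \<Rightarrow> nat. strict_mono r \<and> (\<lambda>k. T (x (r k))) \<longlonglongrightarrow> T z))"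

definition Talpha_regular :: "('a::topological_space \<Rightarrow> 'a) \<Rightarrow> ('a \<Rightarrow> 'a \<Rightarrow> real) \<Rightarrow> bool" where
  "Talpha_regular T \<alpha> \<longleftrightarrow>
     (\<forall>x z. orbital T \<alpha> (x :: nat \<Rightarrow> 'a) \<and> x \<longlonglongrightarrow> z \<longrightarrow>
        (\<exists>r::nat \<Rightarrow> nat. strict_mono r \<and> (\<forall>k. \<alpha> (x (r k)) z \<ge> 1)))"

text \<open>An alpha-chain from x to y: a tuple (z_0,...,z_n), encoded as a list of length n+1.\<close>
definition alpha_chain :: "('a \<Rightarrow> 'a \<Rightarrow> real) \<Rightarrow> 'a \<Rightarrow> 'a \<Rightarrow> 'a list \<Rightarrow> bool" where
  "alpha_chain \<alpha> x y zs \<longleftrightarrow> zs \<noteq> [] \<and> hd zs = x \<and> last zs = y \<and>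
     (\<forall>i. 1 \<le> i \<and> i < length zs \<longrightarrow> \<alpha> (zs ! (i - 1)) (zs ! i) \<ge> 1 \<or> \<alpha> (zs ! i) (zs ! (i - 1)) \<ge> 1)"

definition alpha_connected :: "('a \<Rightarrow> 'a \<Rightarrow> real) \<Rightarrow> bool" where
  "alpha_connected \<alpha> \<longleftrightarrow> (\<forall>x y. x \<noteq> y \<longrightarrow> (\<exists>zs. alpha_chain \<alpha> x y zs))"

end

theory Submission
  imports Defs
begin

text \<open>Along an \<open>\<alpha>\<close>-linked pair \<open>a, b\<close> the map \<open>T\<close> is nonexpansive, and the Meir--Keeler
  condition forces \<open>d(T^n a, T^n b)\<close> to decrease to \<open>0\<close>. On the orbit \<open>x n = T^n x0\<close>,
  \<open>N\<close>-transitivity links \<open>x M\<close> with every \<open>x (M + j N + 1)\<close>; once consecutive steps are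
  shorter than \<open>\<eta>\<close>, the Meir--Keeler condition at scale \<open>\<epsilon>\<close> keeps these jumps shorter than
  \<open>\<epsilon> + N \<eta>\<close> by induction on \<open>j\<close>, so the orbit is Cauchy. Orbital continuity or regularity
  makes its limit a fixed point, and along an \<open>\<alpha>\<close>-chain from any \<open>y\<close> to it, admissibility
  keeps all links of the iterated chain \<open>\<alpha>\<close>-linked, so \<open>T^n y\<close> converges to the same point.\<close>

lemma less_if_one_le_mult_less:
  fixes c d e :: real
  assumes "1 \<le> c" "0 \<le> d" "c * d < e"
  shows "d < e"
  using assms mult_right_mono[OF assms(1,2)] by simp

lemma dist_le_sum_dist_Suc:
  fixes g :: "nat \<Rightarrow> 'a::metric_space"
  shows "dist (g 0) (g k) \<le> (\<Sum>i<k. dist (g i) (g (Suc i)))"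
proof (induction k)
  case (Suc k)
  then show ?case using dist_triangle[of "g 0" "g (Suc k)" "g k"] by simp
qed simp

lemma dist_le_steps:
  fixes x :: "nat \<Rightarrow> 'a::metric_space"
  assumes "\<And>n. n \<ge> M \<Longrightarrow> dist (x n) (x (Suc n)) \<le> \<eta>" "a \<ge> M"
  shows "dist (x a) (x (a + r)) \<le> real r * \<eta>"
proof -
  have "dist (x a) (x (a + r)) \<le> (\<Sum>i<r. dist (x (a + i)) (x (a + Suc i)))"
    using dist_le_sum_dist_Suc[of "\<lambda>i. x (a + i)" r] by simp
  also have "\<dots> \<le> (\<Sum>i<r. \<eta>)"
    using assms by (intro sum_mono) simp
  finally show ?thesis by simp
qed

lemma funpow_fixed_point: "f z = z \<Longrightarrow> (f ^^ n) z = z"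
  by (induction n) auto

lemma alpha_admissible_funpow:
  assumes "alpha_admissible \<alpha> T" "\<alpha> a b \<ge> 1"
  shows "\<alpha> ((T ^^ n) a) ((T ^^ n) b) \<ge> 1"
  using assms by (induction n) (auto simp: alpha_admissible_def)

lemma alpha_MK_contractive_dist_le:
  assumes "alpha_MK_contractive \<alpha> T" "(\<alpha>::'a::metric_space \<Rightarrow> 'a \<Rightarrow> real) a b \<ge> 1"
  shows "dist (T a) (T b) \<le> dist a b"
proof (cases "a = b")
  case False
  then obtain \<delta> where "\<delta> > 0" and
    "\<forall>x y. dist a b \<le> dist x y \<and> dist x y < dist a b + \<delta> \<longrightarrow> \<alpha> x y * dist (T x) (T y) < dist a b"
    using assms(1) unfolding alpha_MK_contractive_def by (meson zero_less_dist_iff)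
  then have "\<alpha> a b * dist (T a) (T b) < dist a b" by auto
  then show ?thesis using less_if_one_le_mult_less[OF assms(2) zero_le_dist] by fastforce
qed simp

lemma alpha_MK_contractiveD:
  assumes "alpha_MK_contractive \<alpha> T" "\<epsilon> > 0"
  obtains \<delta> where "\<delta> > 0"
    "\<And>a b. (\<alpha>::'a::metric_space \<Rightarrow> 'a \<Rightarrow> real) a b \<ge> 1 \<Longrightarrow> dist a b < \<epsilon> + \<delta> \<Longrightarrow> dist (T a) (T b) < \<epsilon>"
proof -
  obtain \<delta> where "\<delta> > 0" and \<delta>:
    "\<forall>x y. \<epsilon> \<le> dist x y \<and> dist x y < \<epsilon> + \<delta> \<longrightarrow> \<alpha> x y * dist (T x) (T y) < \<epsilon>"
    using assms unfolding alpha_MK_contractive_def by blast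
  have "dist (T a) (T b) < \<epsilon>" if "\<alpha> a b \<ge> 1" "dist a b < \<epsilon> + \<delta>" for a b
  proof (cases "\<epsilon> \<le> dist a b")
    case True
    then show ?thesis using \<delta> that less_if_one_le_mult_less[OF that(1) zero_le_dist] by blast
  next
    case False
    then show ?thesis using alpha_MK_contractive_dist_le[OF assms(1) that(1)] by linarith
  qed
  with \<open>\<delta> > 0\<close> show ?thesis using that by blast
qed

lemma alpha_MK_contractive_dist_tendsto_0:
  fixes \<alpha> :: "'a::metric_space \<Rightarrow> 'a \<Rightarrow> real"
  assumes mk: "alpha_MK_contractive \<alpha> T"
    and a: "\<And>n. a (Suc n) = T (a n)" and b: "\<And>n. b (Suc n) = T (b n)"
    and ab: "\<And>n. \<alpha> (a n) (b n) \<ge> 1"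
  shows "(\<lambda>n. dist (a n) (b n)) \<longlonglongrightarrow> 0"
proof -
  define D where "D n = dist (a n) (b n)" for n
  have "D (Suc n) \<le> D n" for n
    unfolding D_def a b using alpha_MK_contractive_dist_le[OF mk ab] .
  then have "decseq D" by (simp add: decseq_SucI)
  then obtain L where L: "D \<longlonglongrightarrow> L" and L_le: "\<And>n. L \<le> D n"
    using decseq_convergent[of D 0] by (auto simp: D_def)
  have "L = 0"
  proof (rule ccontr)
    assume "L \<noteq> 0"
    moreover have "L \<ge> 0" by (rule LIMSEQ_le_const[OF L]) (simp add: D_def)
    ultimately obtain \<delta> where "\<delta> > 0" and \<delta>:
      "\<And>x y. \<alpha> x y \<ge> 1 \<Longrightarrow> dist x y < L + \<delta> \<Longrightarrow> dist (T x) (T y) < L"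
      using alpha_MK_contractiveD[OF mk, of L] by (metis order_neq_le_trans)
    from L \<open>\<delta> > 0\<close> obtain n where "dist (D n) L < \<delta>"
      unfolding LIMSEQ_def by blast
    then have "D (Suc n) < L"
      using \<delta>[OF ab] by (simp add: D_def a b dist_real_def)
    with L_le show False by (meson not_le)
  qed
  with L show ?thesis by (simp add: D_def[abs_def])
qed

lemma N_transitive_jumps:
  assumes "N_transitive N \<alpha>" "\<And>n. \<alpha> (x n) (x (Suc n)) \<ge> 1"
  shows "\<alpha> (x p) (x (p + j * N + 1)) \<ge> 1"
proof (induction j)
  case (Suc j)
  define w where "w i = (if i = 0 then x p else x (p + j * N + i))" for i
  have "\<forall>i\<le>N. \<alpha> (w i) (w (Suc i)) \<ge> 1"
    using Suc assms(2) unfolding w_def by (auto simp: add.assoc)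
  then have "\<alpha> (w 0) (w (Suc N)) \<ge> 1"
    using assms(1) unfolding N_transitive_def by blast
  then show ?case unfolding w_def by (simp add: algebra_simps)
qed (use assms(2) in simp)

lemma dist_jumps_less:
  fixes x :: "nat \<Rightarrow> 'a::metric_space"
  assumes "N > 0" "\<epsilon> > 0" and orbit: "\<And>n. x (Suc n) = T (x n)"
    and jump: "\<And>j. \<alpha> (x M) (x (M + j * N + 1)) \<ge> 1"
    and contr: "\<And>a b. \<alpha> a b \<ge> 1 \<Longrightarrow> dist a b < \<epsilon> + \<delta> \<Longrightarrow> dist (T a) (T b) < \<epsilon>"
    and steps: "\<And>n. n \<ge> M \<Longrightarrow> dist (x n) (x (Suc n)) \<le> \<eta>"
    and "real N * \<eta> < \<delta>"
  shows "dist (x M) (x (M + j * N + 1)) < \<epsilon> + real N * \<eta>"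
proof (induction j)
  case 0
  have "0 \<le> \<eta>" using steps[of M] zero_le_dist order_trans by blast
  then have "\<eta> \<le> real N * \<eta>" using \<open>N > 0\<close> by (simp add: mult_le_cancel_right1)
  then show ?case using steps[of M] \<open>\<epsilon> > 0\<close> by simp
next
  case (Suc j)
  let ?b = "x (M + Suc j * N + 1)"
  have "dist (x (Suc M)) (x (Suc (M + j * N + 1))) < \<epsilon>"
    unfolding orbit using contr[OF jump] Suc \<open>real N * \<eta> < \<delta>\<close> by simp
  moreover have "dist (x (Suc (M + j * N + 1))) ?b \<le> real (N - 1) * \<eta>"
    using dist_le_steps[of M x \<eta> "Suc (M + j * N + 1)" "N - 1"] steps \<open>N > 0\<close> by (simp add: ac_simps)
  moreover have "real (N - 1) * \<eta> + \<eta> = real N * \<eta>"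
    using \<open>N > 0\<close> by (simp add: of_nat_diff algebra_simps)
  ultimately show ?case
    using steps[of M] dist_triangle[of "x M" ?b "x (Suc M)"]
      dist_triangle[of "x (Suc M)" ?b "x (Suc (M + j * N + 1))"] by simp
qed

lemma Cauchy_orbit_if_N_transitive:
  fixes x :: "nat \<Rightarrow> 'a::metric_space"
  assumes "N > 0" "N_transitive N \<alpha>" and mk: "alpha_MK_contractive \<alpha> T"
    and orbit: "\<And>n. x (Suc n) = T (x n)" and linked: "\<And>n. \<alpha> (x n) (x (Suc n)) \<ge> 1"
  shows "Cauchy x"
  unfolding Cauchy_def
proof (intro allI impI)
  fix e :: real
  assume "e > 0"
  define \<epsilon> where "\<epsilon> = e / 4"
  have "\<epsilon> > 0" using \<open>e > 0\<close> by (simp add: \<epsilon>_def)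
  then obtain \<delta> where "\<delta> > 0" and contr:
    "\<And>a b. \<alpha> a b \<ge> 1 \<Longrightarrow> dist a b < \<epsilon> + \<delta> \<Longrightarrow> dist (T a) (T b) < \<epsilon>"
    using alpha_MK_contractiveD[OF mk] by blast
  define \<eta> where "\<eta> = min \<delta> \<epsilon> / (2 * real N)"
  have N\<eta>: "real N * \<eta> = min \<delta> \<epsilon> / 2" using \<open>N > 0\<close> by (simp add: \<eta>_def)
  have "\<eta> > 0" using \<open>\<delta> > 0\<close> \<open>\<epsilon> > 0\<close> \<open>N > 0\<close> by (simp add: \<eta>_def)
  have "(\<lambda>n. dist (x n) (x (Suc n))) \<longlonglongrightarrow> 0"
    using alpha_MK_contractive_dist_tendsto_0[OF mk, of x "\<lambda>n. x (Suc n)"] orbit linked by simp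
  with \<open>\<eta> > 0\<close> obtain M where "\<forall>n\<ge>M. dist (x n) (x (Suc n)) < \<eta>"
    unfolding lim_sequentially by (auto simp: dist_real_def)
  then have steps: "\<And>n. n \<ge> M \<Longrightarrow> dist (x n) (x (Suc n)) \<le> \<eta>" by (simp add: less_imp_le)
  have from_M: "dist (x M) (x n) < 2 * \<epsilon>" if "n > M" for n
  proof -
    define j where "j = (n - M - 1) div N"
    define r where "r = (n - M - 1) mod N"
    have n: "n = M + j * N + 1 + r" using that by (simp add: j_def r_def)
    have "real N * \<eta> < \<delta>" using N\<eta> \<open>\<delta> > 0\<close> by linarith
    with \<open>N > 0\<close> \<open>\<epsilon> > 0\<close> orbit N_transitive_jumps[of N \<alpha> x, OF assms(2) linked] contr steps
    have "dist (x M) (x (M + j * N + 1)) < \<epsilon> + real N * \<eta>"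
      by (rule dist_jumps_less)
    moreover have "dist (x (M + j * N + 1)) (x n) \<le> real r * \<eta>"
      using dist_le_steps[of M x \<eta> "M + j * N + 1" r] steps n by simp
    moreover have "real r * \<eta> \<le> real N * \<eta>"
      using \<open>\<eta> > 0\<close> \<open>N > 0\<close> by (simp add: r_def)
    ultimately show ?thesis
      using dist_triangle[of "x M" "x n" "x (M + j * N + 1)"] N\<eta> by linarith
  qed
  show "\<exists>M. \<forall>m\<ge>M. \<forall>n\<ge>M. dist (x m) (x n) < e"
  proof (intro exI allI impI)
    fix m n assume "m \<ge> M" "n \<ge> M"
    then have "dist (x M) (x m) < 2 * \<epsilon>" "dist (x M) (x n) < 2 * \<epsilon>"
      using from_M[of m] from_M[of n] \<open>\<epsilon> > 0\<close> by (cases "m = M"; cases "n = M"; simp)+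
    then show "dist (x m) (x n) < e"
      using dist_triangle3[of "x m" "x n" "x M"] by (simp add: \<epsilon>_def)
  qed
qed

lemma orbital_limit_fixed_point:
  assumes mk: "alpha_MK_contractive \<alpha> T"
    and orb: "orbital T \<alpha> x" and lim: "x \<longlonglongrightarrow> (z::'a::metric_space)"
    and "alpha_orbitally_continuous T \<alpha> \<or> Talpha_regular T \<alpha>"
  shows "T z = z"
proof -
  have iterate: "\<forall>n. x n = (T ^^ n) (x 0)" using orb unfolding orbital_def by blast
  have orbit: "x (Suc n) = T (x n)" for n
    using spec[OF iterate, of n] spec[OF iterate, of "Suc n"] by simp
  have shifted: "(\<lambda>k. x (Suc (r k))) \<longlonglongrightarrow> z" if "strict_mono r" for r
    using LIMSEQ_subseq_LIMSEQ[OF LIMSEQ_Suc[OF lim] that] by (simp add: o_def)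
  from assms(4) show ?thesis
  proof
    assume "alpha_orbitally_continuous T \<alpha>"
    then obtain r where r: "strict_mono r" "(\<lambda>k. T (x (r k))) \<longlonglongrightarrow> T z"
      using orb lim unfolding alpha_orbitally_continuous_def by blast
    then have "(\<lambda>k. x (Suc (r k))) \<longlonglongrightarrow> T z" by (simp add: orbit)
    then show ?thesis using shifted[OF r(1)] by (rule LIMSEQ_unique)
  next
    assume "Talpha_regular T \<alpha>"
    then obtain r :: "nat \<Rightarrow> nat" where r: "strict_mono r" "\<And>k. \<alpha> (x (r k)) z \<ge> 1"
      using orb lim unfolding Talpha_regular_def by blast
    have "(\<lambda>k. dist (x (Suc (r k))) (T z)) \<longlonglongrightarrow> 0"
    proof (rule Lim_null_comparison)
      show "\<forall>\<^sub>F k in sequentially. norm (dist (x (Suc (r k))) (T z)) \<le> dist (x (r k)) z"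
        unfolding orbit using alpha_MK_contractive_dist_le[OF mk r(2)] by simp
      show "(\<lambda>k. dist (x (r k)) z) \<longlonglongrightarrow> 0"
        using tendsto_dist_iff[THEN iffD1, OF LIMSEQ_subseq_LIMSEQ[OF lim r(1)]] by (simp add: o_def)
    qed
    then have "(\<lambda>k. x (Suc (r k))) \<longlonglongrightarrow> T z" by (rule tendsto_dist_iff[THEN iffD2])
    then show ?thesis using shifted[OF r(1)] by (rule LIMSEQ_unique)
  qed
qed

lemma alpha_chain_funpow_dist_tendsto_0:
  assumes mk: "alpha_MK_contractive \<alpha> T" and ad: "alpha_admissible \<alpha> T"
    and chain: "alpha_chain \<alpha> y z zs"
  shows "(\<lambda>n. dist ((T ^^ n) y) ((T ^^ n) (z::'a::metric_space))) \<longlonglongrightarrow> 0"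
proof -
  define k where "k = length zs - 1"
  have "zs ! 0 = y" "zs ! k = z"
    using chain by (auto simp: alpha_chain_def k_def hd_conv_nth last_conv_nth)
  have link: "(\<lambda>n. dist ((T ^^ n) (zs ! i)) ((T ^^ n) (zs ! Suc i))) \<longlonglongrightarrow> 0" if "i < k" for i
  proof -
    have "\<forall>j. 1 \<le> j \<and> j < length zs \<longrightarrow>
        \<alpha> (zs ! (j - 1)) (zs ! j) \<ge> 1 \<or> \<alpha> (zs ! j) (zs ! (j - 1)) \<ge> 1"
      using chain unfolding alpha_chain_def by blast
    then have "\<alpha> (zs ! i) (zs ! Suc i) \<ge> 1 \<or> \<alpha> (zs ! Suc i) (zs ! i) \<ge> 1"
      using that by (auto simp: k_def dest: spec[of _ "Suc i"])
    moreover have linked: "(\<lambda>n. dist ((T ^^ n) a) ((T ^^ n) b)) \<longlonglongrightarrow> 0" if "\<alpha> a b \<ge> 1" for a b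
      using alpha_MK_contractive_dist_tendsto_0[OF mk, of "\<lambda>n. (T ^^ n) a" "\<lambda>n. (T ^^ n) b"]
        alpha_admissible_funpow[OF ad that] by simp
    ultimately show ?thesis
      using linked[of "zs ! Suc i" "zs ! i"] by (auto simp: dist_commute)
  qed
  have "dist ((T ^^ n) y) ((T ^^ n) z) \<le> (\<Sum>i<k. dist ((T ^^ n) (zs ! i)) ((T ^^ n) (zs ! Suc i)))" for n
    using dist_le_sum_dist_Suc[of "\<lambda>i. (T ^^ n) (zs ! i)" k] \<open>zs ! 0 = y\<close> \<open>zs ! k = z\<close> by simp
  then have "\<forall>\<^sub>F n in sequentially. norm (dist ((T ^^ n) y) ((T ^^ n) z))
      \<le> (\<Sum>i<k. dist ((T ^^ n) (zs ! i)) ((T ^^ n) (zs ! Suc i)))"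
    by simp
  moreover have "(\<lambda>n. \<Sum>i<k. dist ((T ^^ n) (zs ! i)) ((T ^^ n) (zs ! Suc i))) \<longlonglongrightarrow> 0"
    using link by (intro tendsto_null_sum) auto
  ultimately show ?thesis by (rule Lim_null_comparison)
qed

theorem theorem4:
  fixes T :: "'a::complete_space \<Rightarrow> 'a"
    and \<alpha> :: "'a \<Rightarrow> 'a \<Rightarrow> real"
    and N :: nat
  assumes "N \<noteq> 0"
    and "\<forall>x y. \<alpha> x y \<ge> 0"
    and "N_transitive N \<alpha>"
    and "alpha_MK_contractive \<alpha> T"
    and "alpha_admissible \<alpha> T"
    and "\<exists>x0. \<alpha> x0 (T x0) \<ge> 1"
    and "alpha_orbitally_continuous T \<alpha> \<or> Talpha_regular T \<alpha>"
    and "alpha_connected \<alpha>"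
  shows "\<exists>xs. T xs = xs \<and> (\<forall>y. T y = y \<longrightarrow> y = xs) \<and> (\<forall>x. (\<lambda>n. (T ^^ n) x) \<longlonglongrightarrow> xs)"
proof -
  obtain x0 where x0: "\<alpha> x0 (T x0) \<ge> 1" using assms(6) by blast
  define x where "x n = (T ^^ n) x0" for n
  have orbit: "x (Suc n) = T (x n)" for n by (simp add: x_def)
  have linked: "\<alpha> (x n) (x (Suc n)) \<ge> 1" for n
    using alpha_admissible_funpow[OF assms(5) x0, of n] by (simp add: x_def funpow_swap1)
  have "Cauchy x"
    using Cauchy_orbit_if_N_transitive[of N \<alpha> T x] assms(1,3,4) orbit linked by simp
  then obtain z where lim: "x \<longlonglongrightarrow> z" using Cauchy_convergent_iff convergent_def by blast
  have "orbital T \<alpha> x" using linked by (simp add: orbital_def x_def)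
  with assms(4,7) lim have fixed: "T z = z" by (blast intro: orbital_limit_fixed_point)
  have conv: "(\<lambda>n. (T ^^ n) y) \<longlonglongrightarrow> z" for y
  proof (cases "y = z")
    case False
    then obtain zs where "alpha_chain \<alpha> y z zs" using assms(8) unfolding alpha_connected_def by blast
    then have "(\<lambda>n. dist ((T ^^ n) y) ((T ^^ n) z)) \<longlonglongrightarrow> 0"
      by (rule alpha_chain_funpow_dist_tendsto_0[OF assms(4,5)])
    then have "(\<lambda>n. dist ((T ^^ n) y) z) \<longlonglongrightarrow> 0"
      by (simp add: funpow_fixed_point[of T z, OF fixed])
    then show ?thesis by (rule tendsto_dist_iff[THEN iffD2])
  qed (simp add: funpow_fixed_point[of T z, OF fixed])
  have "y = z" if "T y = y" for y
    using conv[of y] by (simp add: funpow_fixed_point[of T y, OF that] LIMSEQ_const_iff)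
  with fixed conv show ?thesis by blast
qed

end
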